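(* Let $(C,\chi)$ be a Hopf heap. If a Grunspan map $\vartheta$ for $C$ exists, then necessarily $\vartheta(c)=\sum[c_{(1)},[c_{(4)},c_{(3)},c_{(2)}],c_{(5)}]$ for all $c\in C$; in particular it is unique. Moreover, if $f:C\to D$ is a morphism of Hopf heaps and $C,D$ have Grunspan maps $\vartheta_C,\vartheta_D$, then $f\circ\vartheta_C=\vartheta_D\circ f$.
   Context: Work over a field $\mathbb{F}$; coalgebras are coassociative, counital, nonzero, with Sweedler notation. $C^{\mathrm{co}}$ is the co-opposite coalgebra. A Hopf heap is a coalgebra $C$ with a coalgebra map $\chi:C\otimes C^{\mathrm{co}}\otimes C\to C$, $a\otimes b\otimes c\mapsto[a,b,c]$, such that $[[a,b,c],d,e]=[a,b,[c,d,e]]$ and $\sum[c_{(1)},c_{(2)},a]=\sum[a,c_{(1)},c_{(2)}]=\varepsilon(c)a$ for all $a,b,c,d,e$. A morphism of Hopf heaps $f:C\to D$ is a coalgebra map with $f([a,b,c])=[f(a),f(b),f(c)]$. A Grunspan map is a coalgebra map $\vartheta:C\to C$ with $[[a,b,\vartheta(c)],d,e]=[a,[d,c,b],e]$ for all $a,b,c,d,e\in C$. *)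

theory Defs
  imports "HOL-Library.Poly_Mapping"
begin

text \<open>
  Vector spaces over a field k are modelled by their basis: the space with basis
  indexed by a type 'b is the space of finitely supported functions 'b to k.
  Tensor products of based spaces are based on products of the index types.
  Linear maps are given by their values on basis vectors and extended linearly.
\<close>

definition vsmul :: "'k::field \<Rightarrow> ('a \<Rightarrow>\<^sub>0 'k) \<Rightarrow> ('a \<Rightarrow>\<^sub>0 'k)" where
  "vsmul c v = Poly_Mapping.map (\<lambda>a. c * a) v"

definition bv :: "'a \<Rightarrow> ('a \<Rightarrow>\<^sub>0 'k::field)" where
  "bv x = Poly_Mapping.single x 1"

definition lext :: "('a \<Rightarrow> ('b \<Rightarrow>\<^sub>0 'k::field)) \<Rightarrow> ('a \<Rightarrow>\<^sub>0 'k) \<Rightarrow> ('b \<Rightarrow>\<^sub>0 'k)" where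
  "lext f v = (\<Sum>i\<in>Poly_Mapping.keys v. vsmul (Poly_Mapping.lookup v i) (f i))"

definition lfun :: "('a \<Rightarrow> 'k::field) \<Rightarrow> ('a \<Rightarrow>\<^sub>0 'k) \<Rightarrow> 'k" where
  "lfun g v = (\<Sum>i\<in>Poly_Mapping.keys v. Poly_Mapping.lookup v i * g i)"

definition tens :: "('a \<Rightarrow>\<^sub>0 'k::field) \<Rightarrow> ('b \<Rightarrow>\<^sub>0 'k) \<Rightarrow> ('a \<times> 'b \<Rightarrow>\<^sub>0 'k)" where
  "tens u w = lext (\<lambda>x. lext (\<lambda>y. bv (x, y)) w) u"

definition coalgebra :: "('b \<Rightarrow> ('b \<times> 'b \<Rightarrow>\<^sub>0 'k::field)) \<Rightarrow> ('b \<Rightarrow> 'k) \<Rightarrow> bool" where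
  "coalgebra D e \<longleftrightarrow>
     (\<forall>x. lext (\<lambda>(y,z). lext (\<lambda>(u,w). bv (u,w,z)) (D y)) (D x)
          = lext (\<lambda>(y,z). lext (\<lambda>(u,w). bv (y,u,w)) (D z)) (D x)) \<and>
     (\<forall>x. lext (\<lambda>(y,z). vsmul (e y) (bv z)) (D x) = bv x) \<and>
     (\<forall>x. lext (\<lambda>(y,z). vsmul (e z) (bv y)) (D x) = bv x)"

definition coopp :: "('b \<Rightarrow> ('b \<times> 'b \<Rightarrow>\<^sub>0 'k::field)) \<Rightarrow> 'b \<Rightarrow> ('b \<times> 'b \<Rightarrow>\<^sub>0 'k)" where
  "coopp D x = lext (\<lambda>(y,z). bv (z,y)) (D x)"

definition tcomult :: "('a \<Rightarrow> ('a \<times> 'a \<Rightarrow>\<^sub>0 'k::field)) \<Rightarrow> ('b \<Rightarrow> ('b \<times> 'b \<Rightarrow>\<^sub>0 'k))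
    \<Rightarrow> 'a \<times> 'b \<Rightarrow> (('a \<times> 'b) \<times> ('a \<times> 'b) \<Rightarrow>\<^sub>0 'k)" where
  "tcomult D1 D2 p = (case p of (x,y) \<Rightarrow>
     lext (\<lambda>(x1,x2). lext (\<lambda>(y1,y2). bv ((x1,y1),(x2,y2))) (D2 y)) (D1 x))"

definition tcounit :: "('a \<Rightarrow> 'k::field) \<Rightarrow> ('b \<Rightarrow> 'k) \<Rightarrow> 'a \<times> 'b \<Rightarrow> 'k" where
  "tcounit e1 e2 p = (case p of (x,y) \<Rightarrow> e1 x * e2 y)"

definition coalg_map :: "('a \<Rightarrow> ('a \<times> 'a \<Rightarrow>\<^sub>0 'k::field)) \<Rightarrow> ('a \<Rightarrow> 'k)
    \<Rightarrow> ('b \<Rightarrow> ('b \<times> 'b \<Rightarrow>\<^sub>0 'k)) \<Rightarrow> ('b \<Rightarrow> 'k) \<Rightarrow> ('a \<Rightarrow> ('b \<Rightarrow>\<^sub>0 'k)) \<Rightarrow> bool" where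
  "coalg_map D1 e1 D2 e2 f \<longleftrightarrow>
     (\<forall>x. lext D2 (f x) = lext (\<lambda>(y,z). tens (f y) (f z)) (D1 x)) \<and>
     (\<forall>x. lfun e2 (f x) = e1 x)"

definition brk :: "('b \<Rightarrow> 'b \<Rightarrow> 'b \<Rightarrow> ('b \<Rightarrow>\<^sub>0 'k::field))
    \<Rightarrow> ('b \<Rightarrow>\<^sub>0 'k) \<Rightarrow> ('b \<Rightarrow>\<^sub>0 'k) \<Rightarrow> ('b \<Rightarrow>\<^sub>0 'k) \<Rightarrow> ('b \<Rightarrow>\<^sub>0 'k)" where
  "brk br u v w = lext (\<lambda>x. lext (\<lambda>y. lext (\<lambda>z. br x y z) w) v) u"

text \<open>iterated comultiplication into (n+1)-fold tensors, indexed by lists: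
  c \<mapsto> c_(1) \<otimes> ... \<otimes> c_(n+1)\<close>
fun itcomult :: "('b \<Rightarrow> ('b \<times> 'b \<Rightarrow>\<^sub>0 'k::field)) \<Rightarrow> nat \<Rightarrow> 'b \<Rightarrow> ('b list \<Rightarrow>\<^sub>0 'k)" where
  "itcomult D 0 x = bv [x]"
| "itcomult D (Suc n) x = lext (\<lambda>(y,z). lext (\<lambda>zs. bv (y # zs)) (itcomult D n z)) (D x)"

text \<open>Sweedler sum  \<Sum> F(c_(1),...,c_(n+1))  for a multilinear F given on basis vectors\<close>
definition sweedler :: "('b \<Rightarrow> ('b \<times> 'b \<Rightarrow>\<^sub>0 'k::field)) \<Rightarrow> nat
    \<Rightarrow> ('b list \<Rightarrow> ('c \<Rightarrow>\<^sub>0 'k)) \<Rightarrow> ('b \<Rightarrow>\<^sub>0 'k) \<Rightarrow> ('c \<Rightarrow>\<^sub>0 'k)" where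
  "sweedler D n F c = lext F (lext (itcomult D n) c)"

definition hopf_heap :: "('b \<Rightarrow> ('b \<times> 'b \<Rightarrow>\<^sub>0 'k::field)) \<Rightarrow> ('b \<Rightarrow> 'k)
    \<Rightarrow> ('b \<Rightarrow> 'b \<Rightarrow> 'b \<Rightarrow> ('b \<Rightarrow>\<^sub>0 'k)) \<Rightarrow> bool" where
  "hopf_heap D e br \<longleftrightarrow>
     coalgebra D e \<and>
     coalg_map (tcomult D (tcomult (coopp D) D)) (tcounit e (tcounit e e)) D e
               (\<lambda>(a,b,c). br a b c) \<and>
     (\<forall>a b c d f. brk br (brk br a b c) d f = brk br a b (brk br c d f)) \<and>
     (\<forall>a c. sweedler D 1 (\<lambda>l. brk br (bv (l!0)) (bv (l!1)) a) c = vsmul (lfun e c) a) \<and>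
     (\<forall>a c. sweedler D 1 (\<lambda>l. brk br a (bv (l!0)) (bv (l!1))) c = vsmul (lfun e c) a)"

definition hh_morphism :: "('a \<Rightarrow> ('a \<times> 'a \<Rightarrow>\<^sub>0 'k::field)) \<Rightarrow> ('a \<Rightarrow> 'k)
    \<Rightarrow> ('a \<Rightarrow> 'a \<Rightarrow> 'a \<Rightarrow> ('a \<Rightarrow>\<^sub>0 'k))
    \<Rightarrow> ('b \<Rightarrow> ('b \<times> 'b \<Rightarrow>\<^sub>0 'k)) \<Rightarrow> ('b \<Rightarrow> 'k) \<Rightarrow> ('b \<Rightarrow> 'b \<Rightarrow> 'b \<Rightarrow> ('b \<Rightarrow>\<^sub>0 'k))
    \<Rightarrow> ('a \<Rightarrow> ('b \<Rightarrow>\<^sub>0 'k)) \<Rightarrow> bool" where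
  "hh_morphism D1 e1 br1 D2 e2 br2 f \<longleftrightarrow>
     coalg_map D1 e1 D2 e2 f \<and>
     (\<forall>a b c. lext f (brk br1 a b c) = brk br2 (lext f a) (lext f b) (lext f c))"

definition grunspan :: "('b \<Rightarrow> ('b \<times> 'b \<Rightarrow>\<^sub>0 'k::field)) \<Rightarrow> ('b \<Rightarrow> 'k)
    \<Rightarrow> ('b \<Rightarrow> 'b \<Rightarrow> 'b \<Rightarrow> ('b \<Rightarrow>\<^sub>0 'k)) \<Rightarrow> ('b \<Rightarrow> ('b \<Rightarrow>\<^sub>0 'k)) \<Rightarrow> bool" where
  "grunspan D e br th \<longleftrightarrow>
     coalg_map D e D e th \<and>
     (\<forall>a b c d f. brk br (brk br a b (lext th c)) d f = brk br a (brk br d c b) f)"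

end

theory Submission
  imports Defs
begin

text \<open>
  Let \<open>\<vartheta>\<close> be a Grunspan map of a Hopf heap and \<open>f\<close> any coalgebra map into it;
  write \<open>c1, c2, \<dots>\<close> for Sweedler components. The counit gives
  \<open>\<vartheta>(f c) = \<Sum> \<epsilon>(c1) \<vartheta>(f c2)\<close>, and the heap axiom \<open>\<Sum>[f c1, f c2, w] = \<epsilon>(c) w\<close>
  turns this into \<open>\<Sum>[f c1, f c2, \<vartheta>(f c3)]\<close>. Splitting off one more counit and using
  the other heap axiom \<open>\<Sum>[u, f c4, f c5] = \<epsilon>(c4) u\<close> gives
  \<open>\<Sum>[[f c1, f c2, \<vartheta>(f c3)], f c4, f c5]\<close>, and the Grunspan identity removes \<open>\<vartheta>\<close>:
  \<open>\<vartheta>(f c) = \<Sum>[f c1, [f c4, f c3, f c2], f c5]\<close>.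
  For \<open>f = id\<close> this is the explicit formula, hence uniqueness. For a morphism
  \<open>f : C \<rightarrow> D\<close>, applying \<open>f\<close> to the formula for \<open>\<vartheta>\<^sub>C c\<close> yields the same
  right-hand side as the identity above for \<open>\<vartheta>\<^sub>D(f c)\<close>.
\<close>

lemma lookup_vsmul [simp]: "Poly_Mapping.lookup (vsmul c v) i = c * Poly_Mapping.lookup v i"
  unfolding vsmul_def by (simp add: Poly_Mapping.map.rep_eq when_def)

lemma vsmul_zero_left [simp]: "vsmul 0 v = 0"
  by (rule poly_mapping_eqI) simp

lemma vsmul_one [simp]: "vsmul 1 v = v"
  by (rule poly_mapping_eqI) simp

lemma vsmul_vsmul [simp]: "vsmul c (vsmul d v) = vsmul (c * d) v"
  by (rule poly_mapping_eqI) (simp add: algebra_simps)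

lemma vsmul_add_left: "vsmul (c + d) v = vsmul c v + vsmul d v"
  by (rule poly_mapping_eqI) (simp add: lookup_add algebra_simps)

lemma vsmul_sum_right: "vsmul c (\<Sum>i\<in>A. f i) = (\<Sum>i\<in>A. vsmul c (f i))"
  by (rule poly_mapping_eqI) (simp add: lookup_sum sum_distrib_left)

lemma vsmul_sum_left: "vsmul (\<Sum>i\<in>A. f i) v = (\<Sum>i\<in>A. vsmul (f i) v)"
  by (rule poly_mapping_eqI) (simp add: lookup_sum sum_distrib_right)

lemma keys_vsmul: "Poly_Mapping.keys (vsmul c v) \<subseteq> Poly_Mapping.keys v"
  by (auto simp: in_keys_iff)

lemma lext_superset:
  assumes "finite S" "Poly_Mapping.keys v \<subseteq> S"
  shows "lext f v = (\<Sum>i\<in>S. vsmul (Poly_Mapping.lookup v i) (f i))"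
  unfolding lext_def
  by (rule sum.mono_neutral_left) (use assms in \<open>auto simp: in_keys_iff\<close>)

lemma lext_add: "lext f (u + v) = lext f u + lext f v"
proof -
  let ?S = "Poly_Mapping.keys u \<union> Poly_Mapping.keys v"
  have "lext f (u + v) = (\<Sum>i\<in>?S. vsmul (Poly_Mapping.lookup (u + v) i) (f i))"
    using keys_add[of u v] by (intro lext_superset) auto
  also have "\<dots> = (\<Sum>i\<in>?S. vsmul (Poly_Mapping.lookup u i) (f i))
                  + (\<Sum>i\<in>?S. vsmul (Poly_Mapping.lookup v i) (f i))"
    by (simp add: lookup_add vsmul_add_left sum.distrib)
  also have "\<dots> = lext f u + lext f v"
    by (subst (1 2) lext_superset[of ?S]) auto
  finally show ?thesis .
qed

lemma lext_vsmul: "lext f (vsmul c v) = vsmul c (lext f v)"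
proof -
  have "lext f (vsmul c v)
      = (\<Sum>i\<in>Poly_Mapping.keys v. vsmul (Poly_Mapping.lookup (vsmul c v) i) (f i))"
    by (rule lext_superset) (auto simp: keys_vsmul)
  then show ?thesis by (simp add: lext_def vsmul_sum_right)
qed

lemma lext_zero [simp]: "lext f 0 = 0"
  by (simp add: lext_def)

lemma lext_sum: "lext f (\<Sum>i\<in>A. g i) = (\<Sum>i\<in>A. lext f (g i))"
  by (induction A rule: infinite_finite_induct) (auto simp: lext_add)

lemma lext_lext: "lext g (lext f v) = lext (\<lambda>x. lext g (f x)) v"
  by (simp only: lext_def[of f v] lext_def[of "\<lambda>x. lext g (f x)" v] lext_sum lext_vsmul)

lemma lext_lext_split: "lext g (lext (\<lambda>(a, b). h a b) v) = lext (\<lambda>(a, b). lext g (h a b)) v"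
  by (simp add: lext_lext split_def)

lemma lext_bv [simp]: "lext f (bv x) = f x"
  by (simp add: lext_def bv_def)

lemma lfun_bv [simp]: "lfun g (bv x) = g x"
  by (simp add: lfun_def bv_def)

lemma lext_bv_left [simp]: "lext bv v = v"
proof (rule poly_mapping_eqI)
  fix j
  have "Poly_Mapping.lookup (lext bv v) j
      = (\<Sum>x\<in>Poly_Mapping.keys v. if x = j then Poly_Mapping.lookup v j else 0)"
    by (simp add: lext_def lookup_sum bv_def lookup_single when_def if_distrib cong: if_cong)
  then show "Poly_Mapping.lookup (lext bv v) j = Poly_Mapping.lookup v j"
    by (simp add: in_keys_iff)
qed

lemma lext_const_vsmul: "lext (\<lambda>x. vsmul (a x) w) v = vsmul (lfun a v) w"
  by (simp add: lext_def lfun_def vsmul_sum_left)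

lemma lext_swap: "lext (\<lambda>x. lext (\<lambda>y. B x y) v) u = lext (\<lambda>y. lext (\<lambda>x. B x y) u) v"
  unfolding lext_def
  by (simp add: vsmul_sum_right mult.commute sum.swap[of _ "Poly_Mapping.keys u"])

lemma lext_tens: "lext g (tens u w) = lext (\<lambda>x. lext (\<lambda>y. g (x, y)) w) u"
  by (simp add: tens_def lext_lext)

lemma brk_lext_basis1: "brk br u v w = lext (\<lambda>x. brk br (bv x) v w) u"
  by (simp add: brk_def)

lemma brk_lext_basis2: "brk br u v w = lext (\<lambda>y. brk br u (bv y) w) v"
  unfolding brk_def lext_bv by (rule lext_swap)

lemma brk_lext_basis3: "brk br u v w = lext (\<lambda>z. brk br u v (bv z)) w"
proof -
  have "brk br u v w = lext (\<lambda>x. lext (\<lambda>z. lext (\<lambda>y. br x y z) v) w) u"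
    unfolding brk_def by (subst lext_swap) (rule refl)
  also have "\<dots> = lext (\<lambda>z. lext (\<lambda>x. lext (\<lambda>y. br x y z) v) u) w"
    by (rule lext_swap)
  finally show ?thesis by (simp add: brk_def)
qed

lemma brk_lext3: "brk br a b (lext g u) = lext (\<lambda>p. brk br a b (g p)) u"
proof -
  have "brk br a b (lext g u) = lext (\<lambda>p. lext (\<lambda>y. brk br a b (bv y)) (g p)) u"
    by (subst brk_lext_basis3) (rule lext_lext)
  then show ?thesis
    by (simp flip: brk_lext_basis3)
qed

lemma brk_vsmul3: "brk br a b (vsmul c w) = vsmul c (brk br a b w)"
  by (subst (1 2) brk_lext_basis3) (simp add: lext_vsmul)

lemma brk_lext_basis12:
  "brk br u v w = lext (\<lambda>x. lext (\<lambda>y. brk br (bv x) (bv y) w) v) u"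
  by (subst brk_lext_basis1) (simp flip: brk_lext_basis2)

lemma brk_lext_basis23:
  "brk br w u v = lext (\<lambda>x. lext (\<lambda>y. brk br w (bv x) (bv y)) v) u"
  by (subst brk_lext_basis2) (simp flip: brk_lext_basis3)

lemma itcomult_0_lext: "lext F (itcomult D 0 x) = F [x]"
  by simp

lemma itcomult_Suc_lext:
  "lext F (itcomult D (Suc n) x)
     = lext (\<lambda>(y, z). lext (\<lambda>zs. F (y # zs)) (itcomult D n z)) (D x)"
  by (simp only: itcomult.simps lext_lext_split) (simp add: lext_lext)

lemma sweedler_1_bv:
  "sweedler D 1 F (bv x) = lext (\<lambda>(y, z). F [y, z]) (D x)"
  by (simp add: sweedler_def itcomult_Suc_lext itcomult_0_lext del: itcomult.simps)

lemma coalgebra_coassoc_lext: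
  assumes "coalgebra D e"
  shows "lext (\<lambda>(c1, z1). lext (\<lambda>(c2, z2). F c1 c2 z2) (D z1)) (D x)
       = lext (\<lambda>(y, z2). lext (\<lambda>(c1, c2). F c1 c2 z2) (D y)) (D x)"
proof -
  have "lext (\<lambda>(y, z). lext (\<lambda>(u, w). bv (u, w, z)) (D y)) (D x)
      = lext (\<lambda>(y, z). lext (\<lambda>(u, w). bv (y, u, w)) (D z)) (D x)"
    using assms unfolding coalgebra_def by blast
  then have "lext (\<lambda>(u, w, z). F u w z) (lext (\<lambda>(y, z). lext (\<lambda>(u, w). bv (u, w, z)) (D y)) (D x))
      = lext (\<lambda>(u, w, z). F u w z) (lext (\<lambda>(y, z). lext (\<lambda>(u, w). bv (y, u, w)) (D z)) (D x))"
    by (rule arg_cong)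
  then show ?thesis by (simp add: lext_lext_split)
qed

lemma coalgebra_counit_left_lext:
  assumes "coalgebra D e"
  shows "lext (\<lambda>(y, z). vsmul (e y) (g z)) (D x) = g x"
proof -
  have "lext (\<lambda>(y, z). vsmul (e y) (bv z)) (D x) = bv x"
    using assms unfolding coalgebra_def by blast
  then have "lext g (lext (\<lambda>(y, z). vsmul (e y) (bv z)) (D x)) = g x"
    by simp
  then show ?thesis by (simp add: lext_lext_split lext_vsmul)
qed

lemma coalgebra_counit_right_lext:
  assumes "coalgebra D e"
  shows "lext (\<lambda>(y, z). vsmul (e z) (g y)) (D x) = g x"
proof -
  have "lext (\<lambda>(y, z). vsmul (e z) (bv y)) (D x) = bv x"
    using assms unfolding coalgebra_def by blast
  then have "lext g (lext (\<lambda>(y, z). vsmul (e z) (bv y)) (D x)) = g x"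
    by simp
  then show ?thesis by (simp add: lext_lext_split lext_vsmul)
qed

lemma coalg_map_comult_lext:
  assumes "coalg_map D e D2 e2 f"
  shows "lext (\<lambda>(u, v). \<Phi> u v) (lext D2 (f y))
       = lext (\<lambda>(a, b). lext (\<lambda>u. lext (\<lambda>v. \<Phi> u v) (f b)) (f a)) (D y)"
proof -
  have "lext D2 (f y) = lext (\<lambda>(a, b). tens (f a) (f b)) (D y)"
    using assms unfolding coalg_map_def by blast
  then show ?thesis by (simp add: lext_lext_split lext_tens)
qed

lemma coalg_map_counit_lext:
  assumes "coalg_map D e D2 e2 f"
  shows "lext (\<lambda>u. vsmul (e2 u) w) (f y) = vsmul (e y) w"
  using assms by (simp add: lext_const_vsmul coalg_map_def)

lemma coalg_map_bv: "coalg_map D e D e bv"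
proof -
  have tens_bv: "tens (bv y) (bv z) = bv (y, z)" for y z
    by (simp add: tens_def)
  have "lext (\<lambda>(y, z). bv (y, z)) v = v" for v :: "('b \<times> 'b) \<Rightarrow>\<^sub>0 'k::field"
    by (simp add: case_prod_eta)
  then show ?thesis
    unfolding coalg_map_def by (simp add: tens_bv)
qed

lemma hopf_heap_counit_left:
  assumes hh: "hopf_heap D2 e2 br2" and cm: "coalg_map D e D2 e2 f"
  shows "lext (\<lambda>(c1, c2). brk br2 (f c1) (f c2) w) (D y) = vsmul (e y) w"
proof -
  have basis: "lext (\<lambda>(u, v). brk br2 (bv u) (bv v) w) (D2 u0) = vsmul (e2 u0) w" for u0
    using hh sweedler_1_bv[of D2 "\<lambda>l. brk br2 (bv (l!0)) (bv (l!1)) w" u0]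
    unfolding hopf_heap_def by simp
  have "lext (\<lambda>(c1, c2). brk br2 (f c1) (f c2) w) (D y)
      = lext (\<lambda>(a, b). lext (\<lambda>u. lext (\<lambda>v. brk br2 (bv u) (bv v) w) (f b)) (f a)) (D y)"
    by (simp only: brk_lext_basis12[where u = "f _"])
  also have "\<dots> = lext (\<lambda>(u, v). brk br2 (bv u) (bv v) w) (lext D2 (f y))"
    by (rule coalg_map_comult_lext[OF cm, symmetric])
  also have "\<dots> = vsmul (e y) w"
    by (simp add: lext_lext basis coalg_map_counit_lext[OF cm])
  finally show ?thesis .
qed

lemma hopf_heap_counit_right:
  assumes hh: "hopf_heap D2 e2 br2" and cm: "coalg_map D e D2 e2 f"
  shows "lext (\<lambda>(c1, c2). brk br2 w (f c1) (f c2)) (D y) = vsmul (e y) w"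
proof -
  have basis: "lext (\<lambda>(u, v). brk br2 w (bv u) (bv v)) (D2 u0) = vsmul (e2 u0) w" for u0
    using hh sweedler_1_bv[of D2 "\<lambda>l. brk br2 w (bv (l!0)) (bv (l!1))" u0]
    unfolding hopf_heap_def by simp
  have "lext (\<lambda>(c1, c2). brk br2 w (f c1) (f c2)) (D y)
      = lext (\<lambda>(a, b). lext (\<lambda>u. lext (\<lambda>v. brk br2 w (bv u) (bv v)) (f b)) (f a)) (D y)"
    by (simp only: brk_lext_basis23[where u = "f _"])
  also have "\<dots> = lext (\<lambda>(u, v). brk br2 w (bv u) (bv v)) (lext D2 (f y))"
    by (rule coalg_map_comult_lext[OF cm, symmetric])
  also have "\<dots> = vsmul (e y) w"
    by (simp add: lext_lext basis coalg_map_counit_lext[OF cm])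
  finally show ?thesis .
qed

lemma grunspan_brk_coalg_map:
  assumes co: "coalgebra D e" and hh: "hopf_heap D2 e2 br2" and gr: "grunspan D2 e2 br2 th2"
    and cm: "coalg_map D e D2 e2 f"
  shows "brk br2 a b (lext th2 (f z))
       = lext (\<lambda>(c3, z3). lext (\<lambda>(c4, c5).
           brk br2 a (brk br2 (f c4) (f c3) b) (f c5)) (D z3)) (D z)"
proof -
  have "brk br2 a b (lext th2 (f z))
      = brk br2 a b (lext (\<lambda>(c3, z3). vsmul (e z3) (lext th2 (f c3))) (D z))"
    by (simp only: coalgebra_counit_right_lext[OF co])
  also have "\<dots> = lext (\<lambda>(c3, z3). vsmul (e z3) (brk br2 a b (lext th2 (f c3)))) (D z)"
    by (simp add: brk_lext3 brk_vsmul3 split_def)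
  also have "\<dots> = lext (\<lambda>(c3, z3). lext (\<lambda>(c4, c5).
           brk br2 (brk br2 a b (lext th2 (f c3))) (f c4) (f c5)) (D z3)) (D z)"
    by (simp only: hopf_heap_counit_right[OF hh cm])
  also have "\<dots> = lext (\<lambda>(c3, z3). lext (\<lambda>(c4, c5).
           brk br2 a (brk br2 (f c4) (f c3) b) (f c5)) (D z3)) (D z)"
    using gr unfolding grunspan_def by simp
  finally show ?thesis .
qed

lemma grunspan_coalg_map_eq:
  assumes co: "coalgebra D e" and hh: "hopf_heap D2 e2 br2" and gr: "grunspan D2 e2 br2 th2"
    and cm: "coalg_map D e D2 e2 f"
  shows "lext th2 (f x)
       = lext (\<lambda>(c1, z1). lext (\<lambda>(c2, z2). lext (\<lambda>(c3, z3). lext (\<lambda>(c4, c5).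
           brk br2 (f c1) (brk br2 (f c4) (f c3) (f c2)) (f c5)) (D z3)) (D z2)) (D z1)) (D x)"
proof -
  have "lext th2 (f x) = lext (\<lambda>(y, z). vsmul (e y) (lext th2 (f z))) (D x)"
    by (simp only: coalgebra_counit_left_lext[OF co])
  also have "\<dots> = lext (\<lambda>(y, z).
      lext (\<lambda>(c1, c2). brk br2 (f c1) (f c2) (lext th2 (f z))) (D y)) (D x)"
    by (simp only: hopf_heap_counit_left[OF hh cm])
  also have "\<dots> = lext (\<lambda>(c1, z1).
      lext (\<lambda>(c2, z2). brk br2 (f c1) (f c2) (lext th2 (f z2))) (D z1)) (D x)"
    by (rule coalgebra_coassoc_lext[OF co, symmetric])
  also have "\<dots> = lext (\<lambda>(c1, z1). lext (\<lambda>(c2, z2). lext (\<lambda>(c3, z3). lext (\<lambda>(c4, c5).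
      brk br2 (f c1) (brk br2 (f c4) (f c3) (f c2)) (f c5)) (D z3)) (D z2)) (D z1)) (D x)"
    by (simp only: grunspan_brk_coalg_map[OF co hh gr cm])
  finally show ?thesis .
qed

lemma grunspan_eq_bv:
  assumes hh: "hopf_heap D e br" and gr: "grunspan D e br th"
  shows "th x
       = lext (\<lambda>(c1, z1). lext (\<lambda>(c2, z2). lext (\<lambda>(c3, z3). lext (\<lambda>(c4, c5).
           brk br (bv c1) (brk br (bv c4) (bv c3) (bv c2)) (bv c5)) (D z3)) (D z2)) (D z1)) (D x)"
proof -
  have "coalgebra D e"
    using hh unfolding hopf_heap_def by blast
  from grunspan_coalg_map_eq[OF this hh gr coalg_map_bv] show ?thesis
    by simp
qed

lemma grunspan_eq_sweedler:
  assumes "hopf_heap D e br" and "grunspan D e br th"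
  shows "lext th c = sweedler D 4
           (\<lambda>l. brk br (bv (l!0)) (brk br (bv (l!3)) (bv (l!2)) (bv (l!1))) (bv (l!4))) c"
proof -
  have basis: "th x = lext (\<lambda>l. brk br (bv (l!0)) (brk br (bv (l!3)) (bv (l!2)) (bv (l!1))) (bv (l!4)))
                 (itcomult D 4 x)" for x
    by (simp add: grunspan_eq_bv[OF assms] itcomult_Suc_lext itcomult_0_lext numeral_eq_Suc del: itcomult.simps)
  show ?thesis
    unfolding sweedler_def lext_lext by (simp only: basis[symmetric])
qed

lemma grunspan_unique:
  assumes "hopf_heap D e br" "grunspan D e br th" "grunspan D e br th'"
  shows "th' = th"
  using grunspan_eq_bv[OF assms(1,2)] grunspan_eq_bv[OF assms(1,3)] by auto

lemma hh_morphism_grunspan_commute: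
  assumes hh: "hopf_heap D e br" and gr: "grunspan D e br th"
    and hh2: "hopf_heap D2 e2 br2" and gr2: "grunspan D2 e2 br2 th2"
    and mor: "hh_morphism D e br D2 e2 br2 f"
  shows "lext f (lext th c) = lext th2 (lext f c)"
proof -
  have co: "coalgebra D e"
    using hh unfolding hopf_heap_def by blast
  have cm: "coalg_map D e D2 e2 f"
    using mor unfolding hh_morphism_def by blast
  have brk_f: "lext f (brk br a b d) = brk br2 (lext f a) (lext f b) (lext f d)" for a b d
    using mor unfolding hh_morphism_def by blast
  have "lext f (th x) = lext th2 (f x)" for x
    unfolding grunspan_eq_bv[OF hh gr] grunspan_coalg_map_eq[OF co hh2 gr2 cm]
    by (simp only: lext_lext_split brk_f lext_bv)
  then show ?thesis
    by (simp only: lext_lext)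
qed

theorem mainTheorem2:
  fixes D :: "'b \<Rightarrow> ('b \<times> 'b \<Rightarrow>\<^sub>0 'k::field)" and e :: "'b \<Rightarrow> 'k"
    and br :: "'b \<Rightarrow> 'b \<Rightarrow> 'b \<Rightarrow> ('b \<Rightarrow>\<^sub>0 'k)" and th :: "'b \<Rightarrow> ('b \<Rightarrow>\<^sub>0 'k)"
  assumes "hopf_heap D e br" and "grunspan D e br th"
  shows "(\<forall>c. lext th c =
            sweedler D 4
              (\<lambda>l. brk br (bv (l!0)) (brk br (bv (l!3)) (bv (l!2)) (bv (l!1))) (bv (l!4))) c)
       \<and> (\<forall>th'. grunspan D e br th' \<longrightarrow> th' = th)
       \<and> (\<forall>(D2 :: 'd \<Rightarrow> ('d \<times> 'd \<Rightarrow>\<^sub>0 'k)) e2 br2 th2 f.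
            hopf_heap D2 e2 br2 \<and> grunspan D2 e2 br2 th2 \<and> hh_morphism D e br D2 e2 br2 f
            \<longrightarrow> (\<forall>c. lext f (lext th c) = lext th2 (lext f c)))"
  using grunspan_eq_sweedler[OF assms] grunspan_unique[OF assms]
    hh_morphism_grunspan_commute[OF assms]
  by blast

end
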